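(* Assume $m=2$, i.e. $\Theta=\{\theta_1,\theta_2\}$, and let $\varphi\in\Delta_1^2$. If there exists $f\in\mathcal{W}^\varphi$ with $f\in\mathcal{F}_{\mathrm{inf}}$, then for every $\widehat f\in\mathcal{W}^\varphi$, $\varphi$ is the unique $\psi\in\Delta_1^2$ satisfying $$\sum_{s=1}^2\big(C^{\theta_s}_p(\widehat f)-C^{\theta_s}_r(\widehat f)\big)\psi_s=0\ \text{ for all } p,r \text{ with } \widehat f_p,\widehat f_r>0,$$ $$\sum_{s=1}^2\big(C^{\theta_s}_p(\widehat f)-C^{\theta_s}_r(\widehat f)\big)\psi_s\le0\ \text{ for all } p,r \text{ with } \widehat f_p>0,\ \widehat f_r=0.$$
   Context: Let $\mathcal{G}=(\mathcal{V},\mathcal{E})$ be a finite directed graph with an origin $v_o$ and a destination $v_d$, and let $\mathcal{P}$ be the (finite) set of acyclic directed paths from $v_o$ to $v_d$, $n=|\mathcal{P}|$. The set of feasible path-flows is $\mathcal{H}=\{f\in\mathbb{R}^n_{\ge0}:\sum_{p\in\mathcal{P}}f_p=1\}$. For a path-flow $f$, the flow on edge $e_k$ is $f_{e_k}=\sum_{p\ni e_k}f_p$. There is a finite set of states $\Theta=\{\theta_1,\dots,\theta_m\}$; in each state $\theta_s$ each edge $e_k$ has a known cost function $C^{\theta_s}_{e_k}:\mathbb{R}_{\ge0}\to\mathbb{R}_{\ge0}$ that is continuous and strictly increasing. The cost of path $p$ in state $\theta_s$ is $C^{\theta_s}_p(f)=\sum_{e_k\in p}C^{\theta_s}_{e_k}(f_{e_k})$.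 For $\varphi\in\Delta_1^m:=\{x\in\mathbb{R}^m_{\ge0}:\sum_i x_i=1\}$ the expected cost of path $p$ is $C^\varphi_p(f)=\sum_{s}\varphi_sC^{\theta_s}_p(f)$. A flow $f\in\mathcal{H}$ is a $\varphi$-based Wardrop equilibrium ($\varphi$-WE) if for all $p$ with $f_p>0$ we have $C^\varphi_p(f)\le C^\varphi_r(f)$ for all $r\in\mathcal{P}$; $\mathcal{W}^\varphi$ denotes the set of $\varphi$-WE. For each $s$, $\varphi^{\theta_s}\in\Delta_1^m$ is the distribution with $\varphi^{\theta_s}_s=1$, and $\mathcal{W}^{\theta_s}:=\mathcal{W}^{\varphi^{\theta_s}}$. For $\varphi\in\Delta_1^m$, $\mathcal{R}^{\mathrm{use}}_\varphi=\{p\in\mathcal{P}:\exists f\in\mathcal{W}^\varphi,\ f_p>0\}$. In the two-state case, the set of informative flows is $$\mathcal{F}_{\mathrm{inf}}=\{f\in\mathcal{H}: f\notin\mathcal{W}^{\theta_1}\cup\mathcal{W}^{\theta_2},\ f_p>0\ \text{for all } p\in\mathcal{R}^{\mathrm{use}}_{\varphi^{\theta_1}}\}.$$ *)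

theory Defs
  imports "HOL-Analysis.Analysis"
begin

definition od_paths :: "('v \<times> 'v) set \<Rightarrow> 'v \<Rightarrow> 'v \<Rightarrow> 'v list set" where
  "od_paths E vo vd = {p. p \<noteq> [] \<and> hd p = vo \<and> last p = vd \<and> distinct p \<and>
      (\<forall>i. Suc i < length p \<longrightarrow> (p ! i, p ! Suc i) \<in> E)}"

definition path_edges :: "'v list \<Rightarrow> ('v \<times> 'v) set" where
  "path_edges p = set (zip p (tl p))"

definition feasible_flows :: "'v list set \<Rightarrow> ('v list \<Rightarrow> real) set" where
  "feasible_flows P = {f. (\<forall>p\<in>P. f p \<ge> 0) \<and> (\<forall>p. p \<notin> P \<longrightarrow> f p = 0) \<and> sum f P = 1}"

definition edge_flow :: "'v list set \<Rightarrow> ('v list \<Rightarrow> real) \<Rightarrow> ('v \<times> 'v) \<Rightarrow> real" where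
  "edge_flow P f e = (\<Sum>p\<in>{p\<in>P. e \<in> path_edges p}. f p)"

definition path_cost ::
  "(nat \<Rightarrow> ('v \<times> 'v) \<Rightarrow> real \<Rightarrow> real) \<Rightarrow> nat \<Rightarrow> 'v list set \<Rightarrow> ('v list \<Rightarrow> real) \<Rightarrow> 'v list \<Rightarrow> real" where
  "path_cost C s P f p = (\<Sum>e\<in>path_edges p. C s e (edge_flow P f e))"

text \<open>States are indexed by 1..m; distributions are vanishing outside 1..m.\<close>
definition prob_simplex :: "nat \<Rightarrow> (nat \<Rightarrow> real) set" where
  "prob_simplex m = {\<phi>. (\<forall>s\<in>{1..m}. \<phi> s \<ge> 0) \<and> (\<forall>s. s \<notin> {1..m} \<longrightarrow> \<phi> s = 0)
      \<and> (\<Sum>s=1..m. \<phi> s) = 1}"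

definition point_dist :: "nat \<Rightarrow> (nat \<Rightarrow> real)" where
  "point_dist s = (\<lambda>i. if i = s then 1 else 0)"

definition exp_cost ::
  "nat \<Rightarrow> (nat \<Rightarrow> ('v \<times> 'v) \<Rightarrow> real \<Rightarrow> real) \<Rightarrow> (nat \<Rightarrow> real) \<Rightarrow> 'v list set \<Rightarrow> ('v list \<Rightarrow> real) \<Rightarrow> 'v list \<Rightarrow> real" where
  "exp_cost m C \<phi> P f p = (\<Sum>s=1..m. \<phi> s * path_cost C s P f p)"

definition wardrop_eq ::
  "nat \<Rightarrow> (nat \<Rightarrow> ('v \<times> 'v) \<Rightarrow> real \<Rightarrow> real) \<Rightarrow> 'v list set \<Rightarrow> (nat \<Rightarrow> real) \<Rightarrow> ('v list \<Rightarrow> real) set" where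
  "wardrop_eq m C P \<phi> = {f \<in> feasible_flows P. \<forall>p\<in>P. f p > 0 \<longrightarrow>
      (\<forall>r\<in>P. exp_cost m C \<phi> P f p \<le> exp_cost m C \<phi> P f r)}"

definition used_routes ::
  "nat \<Rightarrow> (nat \<Rightarrow> ('v \<times> 'v) \<Rightarrow> real \<Rightarrow> real) \<Rightarrow> 'v list set \<Rightarrow> (nat \<Rightarrow> real) \<Rightarrow> 'v list set" where
  "used_routes m C P \<phi> = {p\<in>P. \<exists>f\<in>wardrop_eq m C P \<phi>. f p > 0}"

definition informative_flows ::
  "(nat \<Rightarrow> ('v \<times> 'v) \<Rightarrow> real \<Rightarrow> real) \<Rightarrow> 'v list set \<Rightarrow> ('v list \<Rightarrow> real) set" where
  "informative_flows C P = {f \<in> feasible_flows P.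
      f \<notin> wardrop_eq 2 C P (point_dist 1) \<union> wardrop_eq 2 C P (point_dist 2) \<and>
      (\<forall>p\<in>used_routes 2 C P (point_dist 1). f p > 0)}"

end

theory Submission
  imports Defs
begin

(* The expected cost under a belief is the route cost of the mixed edge costs, which are
   strictly increasing, so all equilibria for one belief share their edge flows, and a flow
   with the edge flows of an equilibrium is itself an equilibrium. Hence if fh is also an
   equilibrium for a belief psi different from phi, so is the informative flow f, and with two
   states this makes the state-1 costs constant on the support of f. A state-1 equilibrium
   exists (a minimiser of the Beckmann potential) and, f being informative, is supported
   inside the support of f; comparing total costs then makes f a state-1 equilibrium too,
   a contradiction. *)

definition route_cost ::
  "(('v \<times> 'v) \<Rightarrow> real \<Rightarrow> real) \<Rightarrow> 'v list set \<Rightarrow> ('v list \<Rightarrow> real) \<Rightarrow> 'v list \<Rightarrow> real" where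
  "route_cost c P f p = (\<Sum>e\<in>path_edges p. c e (edge_flow P f e))"

definition wardrop_flows ::
  "(('v \<times> 'v) \<Rightarrow> real \<Rightarrow> real) \<Rightarrow> 'v list set \<Rightarrow> ('v list \<Rightarrow> real) set" where
  "wardrop_flows c P = {f \<in> feasible_flows P. \<forall>p\<in>P. f p > 0 \<longrightarrow>
      (\<forall>r\<in>P. route_cost c P f p \<le> route_cost c P f r)}"

definition mixed_edge_cost ::
  "nat \<Rightarrow> (nat \<Rightarrow> ('v \<times> 'v) \<Rightarrow> real \<Rightarrow> real) \<Rightarrow> (nat \<Rightarrow> real) \<Rightarrow> ('v \<times> 'v) \<Rightarrow> real \<Rightarrow> real" where
  "mixed_edge_cost m C \<phi> e y = (\<Sum>s=1..m. \<phi> s * C s e y)"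

lemma feasible_flows_finite: "f \<in> feasible_flows P \<Longrightarrow> finite P"
  by (auto simp: feasible_flows_def intro: ccontr)

lemma feasible_flows_nonneg: "f \<in> feasible_flows P \<Longrightarrow> p \<in> P \<Longrightarrow> 0 \<le> f p"
  by (simp add: feasible_flows_def)

lemma feasible_flows_support_nonempty:
  assumes "f \<in> feasible_flows P"
  obtains p where "p \<in> P" "f p > 0"
proof -
  have "sum f P \<noteq> 0"
    using assms by (simp add: feasible_flows_def)
  then obtain p where "p \<in> P" "f p \<noteq> 0"
    by (meson sum.neutral)
  with feasible_flows_nonneg[OF assms] that show thesis
    by force
qed

lemma sum_feasible_flow_const:
  assumes "f \<in> feasible_flows P" and "\<And>p. p \<in> P \<Longrightarrow> f p > 0 \<Longrightarrow> k p = a"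
  shows "(\<Sum>p\<in>P. f p * k p) = a"
proof -
  have "(\<Sum>p\<in>P. f p * k p) = (\<Sum>p\<in>P. f p * a)"
  proof (rule sum.cong[OF refl])
    fix p assume "p \<in> P"
    with assms feasible_flows_nonneg[OF assms(1)] show "f p * k p = f p * a"
      by (cases "f p > 0") force+
  qed
  also have "\<dots> = a"
    using assms(1) by (simp add: feasible_flows_def flip: sum_distrib_right)
  finally show ?thesis .
qed

lemma sum_feasible_flow_ge:
  assumes "f \<in> feasible_flows P" and "\<And>p. p \<in> P \<Longrightarrow> a \<le> k p"
  shows "a \<le> (\<Sum>p\<in>P. f p * k p)"
proof -
  have "a = (\<Sum>p\<in>P. f p * a)"
    using assms(1) by (simp add: feasible_flows_def flip: sum_distrib_right)
  also have "\<dots> \<le> (\<Sum>p\<in>P. f p * k p)"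
    by (intro sum_mono mult_left_mono assms(2) feasible_flows_nonneg[OF assms(1)])
  finally show ?thesis .
qed

lemma od_paths_edges: "p \<in> od_paths E vo vd \<Longrightarrow> path_edges p \<subseteq> E"
proof
  fix x assume p: "p \<in> od_paths E vo vd" and "x \<in> path_edges p"
  then obtain n where n: "p ! n = fst x" "tl p ! n = snd x" "n < length (tl p)"
    unfolding path_edges_def in_set_zip by blast
  then have "Suc n < length p" and "tl p ! n = p ! Suc n"
    by (auto simp: nth_tl)
  with p n show "x \<in> E"
    unfolding od_paths_def by (cases x) auto
qed

lemma edge_flow_nonneg: "f \<in> feasible_flows P \<Longrightarrow> 0 \<le> edge_flow P f e"
  unfolding edge_flow_def by (rule sum_nonneg) (auto simp: feasible_flows_def)

lemma edge_flow_le_1: "f \<in> feasible_flows P \<Longrightarrow> edge_flow P f e \<le> 1"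
proof -
  assume f: "f \<in> feasible_flows P"
  have "edge_flow P f e \<le> sum f P"
    unfolding edge_flow_def
    by (rule sum_mono2) (use f feasible_flows_finite feasible_flows_nonneg in auto)
  with f show ?thesis by (simp add: feasible_flows_def)
qed

lemma edge_flow_diff: "edge_flow P (\<lambda>p. g p - h p) e = edge_flow P g e - edge_flow P h e"
  by (simp add: edge_flow_def sum_subtractf)

lemma sum_paths_eq_sum_edges:
  assumes "finite P" "finite E" "\<And>p. p \<in> P \<Longrightarrow> path_edges p \<subseteq> E"
  shows "(\<Sum>p\<in>P. g p * (\<Sum>e\<in>path_edges p. a e)) = (\<Sum>e\<in>E. a e * edge_flow P g e)"
proof -
  have "(\<Sum>p\<in>P. g p * (\<Sum>e\<in>path_edges p. a e)) = (\<Sum>p\<in>P. \<Sum>e\<in>{e\<in>E. e \<in> path_edges p}. g p * a e)"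
    using assms(3) by (intro sum.cong refl) (auto simp: sum_distrib_left Int_absorb1 Collect_conj_eq)
  also have "\<dots> = (\<Sum>e\<in>E. \<Sum>p\<in>{p\<in>P. e \<in> path_edges p}. g p * a e)"
    by (rule sum.swap_restrict) (use assms in auto)
  also have "\<dots> = (\<Sum>e\<in>E. a e * edge_flow P g e)"
    by (simp add: edge_flow_def sum_distrib_left mult.commute)
  finally show ?thesis .
qed

lemma route_cost_cong:
  assumes "path_edges p \<subseteq> E" "\<And>e. e \<in> E \<Longrightarrow> edge_flow P g e = edge_flow P h e"
  shows "route_cost c P g p = route_cost c P h p"
  unfolding route_cost_def using assms by (intro sum.cong) auto

section \<open>Equilibria for a single edge cost\<close>

lemma strict_mono_on_gap_pos:
  fixes c :: "real \<Rightarrow> real"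
  assumes "strict_mono_on {0..} c" "0 \<le> x" "0 \<le> y" "x \<noteq> y"
  shows "(c x - c y) * (x - y) > 0"
proof (cases "x < y")
  case True
  with assms have "c x < c y" by (auto intro: strict_mono_onD)
  with True show ?thesis by (simp add: mult_neg_neg)
next
  case False
  with assms have "c y < c x" by (auto intro: strict_mono_onD)
  with False assms(4) show ?thesis by simp
qed

lemma edge_flows_eq_if_cost_gap_nonpos:
  assumes g: "g \<in> feasible_flows P" and h: "h \<in> feasible_flows P"
    and E: "finite E" "\<And>p. p \<in> P \<Longrightarrow> path_edges p \<subseteq> E"
    and mono: "\<And>e. e \<in> E \<Longrightarrow> strict_mono_on {0..} (c e)"
    and gap: "(\<Sum>p\<in>P. (g p - h p) * (route_cost c P g p - route_cost c P h p)) \<le> 0"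
  shows "\<forall>e\<in>E. edge_flow P g e = edge_flow P h e"
proof -
  define gap_e where
    "gap_e e = (c e (edge_flow P g e) - c e (edge_flow P h e)) * (edge_flow P g e - edge_flow P h e)" for e
  have "(\<Sum>p\<in>P. (g p - h p) * (route_cost c P g p - route_cost c P h p)) = sum gap_e E"
    using sum_paths_eq_sum_edges[OF feasible_flows_finite[OF g] E]
    by (simp add: route_cost_def gap_e_def edge_flow_diff flip: sum_subtractf)
  with gap have "sum gap_e E \<le> 0"
    by simp
  have gap_e_pos: "gap_e e > 0" if "e \<in> E" "edge_flow P g e \<noteq> edge_flow P h e" for e
    unfolding gap_e_def
    using strict_mono_on_gap_pos[OF mono] edge_flow_nonneg[OF g] edge_flow_nonneg[OF h] that by blast
  have gap_e_nonneg: "gap_e e \<ge> 0" if "e \<in> E" for e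
  proof (cases "edge_flow P g e = edge_flow P h e")
    case False
    with gap_e_pos[OF that] show ?thesis by simp
  qed (simp add: gap_e_def)
  with \<open>sum gap_e E \<le> 0\<close> have "sum gap_e E = 0"
    by (meson antisym sum_nonneg)
  with E(1) gap_e_nonneg have "\<forall>e\<in>E. gap_e e = 0"
    by (simp add: sum_nonneg_eq_0_iff)
  with gap_e_pos show ?thesis
    by fastforce
qed

lemma wardrop_flows_feasible: "f \<in> wardrop_flows c P \<Longrightarrow> f \<in> feasible_flows P"
  by (simp add: wardrop_flows_def)

lemma wardrop_flows_min_cost:
  assumes "f \<in> wardrop_flows c P" "p \<in> P" "f p > 0" "r \<in> P"
  shows "route_cost c P f p \<le> route_cost c P f r"
  using assms by (simp add: wardrop_flows_def)

lemma wardrop_flows_variational_ineq: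
  assumes g: "g \<in> wardrop_flows c P" and h: "h \<in> feasible_flows P"
  shows "(\<Sum>p\<in>P. g p * route_cost c P g p) \<le> (\<Sum>p\<in>P. h p * route_cost c P g p)"
proof -
  obtain p0 where p0: "p0 \<in> P" "g p0 > 0"
    using feasible_flows_support_nonempty[OF wardrop_flows_feasible[OF g]] .
  have "(\<Sum>p\<in>P. g p * route_cost c P g p) = route_cost c P g p0"
    using wardrop_flows_min_cost[OF g] p0
    by (intro sum_feasible_flow_const wardrop_flows_feasible[OF g] antisym) auto
  also have "\<dots> \<le> (\<Sum>p\<in>P. h p * route_cost c P g p)"
    using wardrop_flows_min_cost[OF g p0] by (intro sum_feasible_flow_ge[OF h])
  finally show ?thesis .
qed

lemma wardrop_flows_edge_flows_eq:
  assumes g: "g \<in> wardrop_flows c P" and h: "h \<in> wardrop_flows c P"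
    and E: "finite E" "\<And>p. p \<in> P \<Longrightarrow> path_edges p \<subseteq> E"
    and mono: "\<And>e. e \<in> E \<Longrightarrow> strict_mono_on {0..} (c e)"
  shows "\<forall>e\<in>E. edge_flow P g e = edge_flow P h e"
proof (rule edge_flows_eq_if_cost_gap_nonpos[OF wardrop_flows_feasible[OF g] wardrop_flows_feasible[OF h] E mono])
  have "(\<Sum>p\<in>P. g p * route_cost c P g p) \<le> (\<Sum>p\<in>P. h p * route_cost c P g p)"
    "(\<Sum>p\<in>P. h p * route_cost c P h p) \<le> (\<Sum>p\<in>P. g p * route_cost c P h p)"
    using wardrop_flows_variational_ineq wardrop_flows_feasible g h by blast+
  then show "(\<Sum>p\<in>P. (g p - h p) * (route_cost c P g p - route_cost c P h p)) \<le> 0"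
    by (simp add: algebra_simps sum_subtractf sum.distrib)
qed

text \<open>Total cost depends on a flow only through its edge flows, so a flow with the
  edge flows of an equilibrium has the equilibrium's minimal total cost; this forces
  it to use only cheapest routes.\<close>
lemma wardrop_flows_if_edge_flows_eq:
  assumes g: "g \<in> wardrop_flows c P" and h: "h \<in> feasible_flows P"
    and E: "finite E" "\<And>p. p \<in> P \<Longrightarrow> path_edges p \<subseteq> E"
    and eq: "\<And>e. e \<in> E \<Longrightarrow> edge_flow P h e = edge_flow P g e"
  shows "h \<in> wardrop_flows c P"
proof -
  have finP: "finite P" using feasible_flows_finite[OF h] .
  obtain p0 where p0: "p0 \<in> P" "g p0 > 0"
    using feasible_flows_support_nonempty[OF wardrop_flows_feasible[OF g]] .
  define a where "a = route_cost c P g p0"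
  have cost_eq: "route_cost c P h p = route_cost c P g p" if "p \<in> P" for p
    by (rule route_cost_cong[OF E(2)[OF that]]) (rule eq)
  have a_le: "a \<le> route_cost c P g p" if "p \<in> P" for p
    using wardrop_flows_min_cost[OF g p0 that] by (simp add: a_def)
  have "(\<Sum>p\<in>P. h p * route_cost c P g p) = (\<Sum>p\<in>P. g p * route_cost c P g p)"
    using sum_paths_eq_sum_edges[OF finP E] by (simp add: route_cost_def eq)
  also have "\<dots> = a"
    using wardrop_flows_min_cost[OF g] p0 a_le
    by (intro sum_feasible_flow_const wardrop_flows_feasible[OF g]) (auto simp: a_def intro: antisym)
  also have "\<dots> = (\<Sum>p\<in>P. h p * a)"
    by (rule sum_feasible_flow_const[OF h refl, symmetric])
  finally have "(\<Sum>p\<in>P. h p * (route_cost c P g p - a)) = 0"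
    by (simp add: right_diff_distrib sum_subtractf)
  moreover have "0 \<le> h p * (route_cost c P g p - a)" if "p \<in> P" for p
    using a_le[OF that] feasible_flows_nonneg[OF h that] by simp
  ultimately have "\<forall>p\<in>P. h p * (route_cost c P g p - a) = 0"
    by (simp add: sum_nonneg_eq_0_iff[OF finP])
  then have "route_cost c P h p = a" if "p \<in> P" "h p > 0" for p
    using that cost_eq by auto
  with h cost_eq a_le show ?thesis
    unfolding wardrop_flows_def by auto
qed

lemma wardrop_flows_if_cost_const_on_supports:
  assumes g: "g \<in> wardrop_flows c P" and h: "h \<in> feasible_flows P"
    and E: "finite E" "\<And>p. p \<in> P \<Longrightarrow> path_edges p \<subseteq> E"
    and mono: "\<And>e. e \<in> E \<Longrightarrow> strict_mono_on {0..} (c e)"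
    and const: "\<And>p. p \<in> P \<Longrightarrow> g p > 0 \<or> h p > 0 \<Longrightarrow> route_cost c P h p = a"
  shows "h \<in> wardrop_flows c P"
proof (rule wardrop_flows_if_edge_flows_eq[OF g h E])
  have "(\<Sum>p\<in>P. g p * route_cost c P h p) = a" "(\<Sum>p\<in>P. h p * route_cost c P h p) = a"
    using const by (auto intro: sum_feasible_flow_const wardrop_flows_feasible[OF g] h)
  moreover have "(\<Sum>p\<in>P. g p * route_cost c P g p) \<le> (\<Sum>p\<in>P. h p * route_cost c P g p)"
    using wardrop_flows_variational_ineq[OF g h] .
  ultimately have gap: "(\<Sum>p\<in>P. (g p - h p) * (route_cost c P g p - route_cost c P h p)) \<le> 0"
    by (simp add: algebra_simps sum_subtractf sum.distrib)
  from wardrop_flows_feasible[OF g] h E mono gap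
  have "\<forall>e\<in>E. edge_flow P g e = edge_flow P h e"
    by (rule edge_flows_eq_if_cost_gap_nonpos)
  then show "\<And>e. e \<in> E \<Longrightarrow> edge_flow P h e = edge_flow P g e"
    by simp
qed

section \<open>Existence via the Beckmann potential\<close>

definition beckmann_potential ::
  "(('v \<times> 'v) \<Rightarrow> real \<Rightarrow> real) \<Rightarrow> ('v \<times> 'v) set \<Rightarrow> 'v list set \<Rightarrow> ('v list \<Rightarrow> real) \<Rightarrow> real" where
  "beckmann_potential c E P f = (\<Sum>e\<in>E. integral {0..edge_flow P f e} (c e))"

lemma feasible_flows_compact:
  assumes "finite P"
  shows "compact (feasible_flows P)"
proof -
  define B where "B p = (if p \<in> P then {0..1} else {0::real})" for p
  have "feasible_flows P = PiE UNIV B \<inter> {f. sum f P = 1}"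
  proof (intro set_eqI iffI)
    fix f assume f: "f \<in> feasible_flows P"
    have "f p \<le> 1" if "p \<in> P" for p
      using member_le_sum[of p P f] f assms that by (auto simp: feasible_flows_def)
    with f show "f \<in> PiE UNIV B \<inter> {f. sum f P = 1}"
      by (auto simp: feasible_flows_def B_def)
  qed (auto simp: feasible_flows_def B_def PiE_iff split: if_splits)
  moreover have "compact (PiE UNIV B)"
    using compactin_PiE[of "\<lambda>_. euclidean" UNIV B] by (simp add: euclidean_product_topology B_def)
  moreover have "closed {f. sum f P = (1::real)}"
    by (intro closed_Collect_eq continuous_on_sum continuous_on_const continuous_on_product_coordinates)
  ultimately show ?thesis
    by (simp add: compact_Int_closed)
qed

lemma single_route_flow_feasible:
  assumes "finite P" "p \<in> P"
  shows "(\<lambda>q. of_bool (q = p)) \<in> feasible_flows P"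
  using assms by (simp add: feasible_flows_def of_bool_def)

lemma integral_increment_le:
  fixes c :: "real \<Rightarrow> real"
  assumes cont: "continuous_on {0..} c" and mono: "mono_on {0..} c" and "0 \<le> y" "0 \<le> z"
  shows "integral {0..z} c - integral {0..y} c \<le> (z - y) * c z"
proof -
  have int: "c integrable_on {a..b}" if "0 \<le> a" for a b
    by (rule integrable_continuous_interval, rule continuous_on_subset[OF cont]) (use that in auto)
  have bound: "integral {a..b} c \<le> (b - a) * c b" "(b - a) * c a \<le> integral {a..b} c"
    if "0 \<le> a" "a \<le> b" for a b
  proof -
    have "integral {a..b} c \<le> integral {a..b} (\<lambda>_. c b)"
      using that by (intro integral_le int mono_onD[OF mono]) auto
    then show "integral {a..b} c \<le> (b - a) * c b"
      using that by (simp add: content_real)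
    have "integral {a..b} (\<lambda>_. c a) \<le> integral {a..b} c"
      using that by (intro integral_le int mono_onD[OF mono]) auto
    then show "(b - a) * c a \<le> integral {a..b} c"
      using that by (simp add: content_real)
  qed
  show ?thesis
  proof (cases "y \<le> z")
    case True
    then have "integral {0..y} c + integral {y..z} c = integral {0..z} c"
      using assms by (intro Henstock_Kurzweil_Integration.integral_combine int) auto
    with bound(1)[of y z] True assms show ?thesis by simp
  next
    case False
    then have "integral {0..z} c + integral {z..y} c = integral {0..y} c"
      using assms by (intro Henstock_Kurzweil_Integration.integral_combine int) auto
    with bound(2)[of z y] False assms show ?thesis by (simp add: algebra_simps)
  qed
qed

lemma beckmann_potential_continuous_on:
  assumes "\<And>e. e \<in> E \<Longrightarrow> continuous_on {0..} (c e)"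
  shows "continuous_on (feasible_flows P) (beckmann_potential c E P)"
  unfolding beckmann_potential_def
proof (rule continuous_on_sum)
  fix e assume e: "e \<in> E"
  have "continuous_on {0..1} (\<lambda>y. integral {0..y} (c e))"
    by (intro indefinite_integral_continuous_1 integrable_continuous_interval
        continuous_on_subset[OF assms[OF e]]) auto
  moreover have "continuous_on (feasible_flows P) (\<lambda>f. edge_flow P f e)"
    unfolding edge_flow_def
    by (intro continuous_on_sum continuous_on_subset[OF continuous_on_product_coordinates]) simp
  ultimately show "continuous_on (feasible_flows P) (\<lambda>f. integral {0..edge_flow P f e} (c e))"
    by (rule continuous_on_compose2) (auto intro: edge_flow_nonneg edge_flow_le_1)
qed

text \<open>The route costs are the gradient of the convex potential.\<close>
lemma beckmann_potential_diff_le: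
  assumes g: "g \<in> feasible_flows P" and h: "h \<in> feasible_flows P"
    and E: "finite E" "\<And>p. p \<in> P \<Longrightarrow> path_edges p \<subseteq> E"
    and cont: "\<And>e. e \<in> E \<Longrightarrow> continuous_on {0..} (c e)"
    and mono: "\<And>e. e \<in> E \<Longrightarrow> mono_on {0..} (c e)"
  shows "beckmann_potential c E P h - beckmann_potential c E P g
    \<le> (\<Sum>p\<in>P. (h p - g p) * route_cost c P h p)"
proof -
  have "beckmann_potential c E P h - beckmann_potential c E P g
      = (\<Sum>e\<in>E. integral {0..edge_flow P h e} (c e) - integral {0..edge_flow P g e} (c e))"
    by (simp add: beckmann_potential_def sum_subtractf)
  also have "\<dots> \<le> (\<Sum>e\<in>E. c e (edge_flow P h e) * edge_flow P (\<lambda>p. h p - g p) e)"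
  proof (rule sum_mono)
    fix e assume e: "e \<in> E"
    show "integral {0..edge_flow P h e} (c e) - integral {0..edge_flow P g e} (c e)
        \<le> c e (edge_flow P h e) * edge_flow P (\<lambda>p. h p - g p) e"
      using integral_increment_le[OF cont[OF e] mono[OF e] edge_flow_nonneg[OF g] edge_flow_nonneg[OF h]]
      by (simp add: edge_flow_diff mult.commute)
  qed
  also have "\<dots> = (\<Sum>p\<in>P. (h p - g p) * route_cost c P h p)"
    unfolding route_cost_def by (rule sum_paths_eq_sum_edges[OF feasible_flows_finite[OF g] E, symmetric])
  finally show ?thesis .
qed

lemma continuous_on_neg_near_0:
  fixes D :: "real \<Rightarrow> real"
  assumes "continuous_on {0..b} D" "D 0 < 0" "0 < b"
  obtains \<epsilon> where "0 < \<epsilon>" "\<epsilon> \<le> b" "D \<epsilon> < 0"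
proof -
  obtain \<delta> where \<delta>: "\<delta> > 0" "\<And>x. x \<in> {0..b} \<Longrightarrow> dist x 0 < \<delta> \<Longrightarrow> dist (D x) (D 0) < - D 0"
    using assms unfolding continuous_on_iff by (metis atLeastAtMost_iff less_eq_real_def neg_0_less_iff_less)
  define \<epsilon> where "\<epsilon> = min b (\<delta> / 2)"
  have "0 < \<epsilon>" "\<epsilon> \<le> b"
    using \<delta> assms by (auto simp: \<epsilon>_def)
  moreover have "dist (D \<epsilon>) (D 0) < - D 0"
    using \<delta> \<open>0 < \<epsilon>\<close> \<open>\<epsilon> \<le> b\<close> by (simp add: \<epsilon>_def)
  then have "D \<epsilon> < 0"
    by (simp add: dist_real_def abs_less_iff)
  ultimately show thesis using that by blast
qed

lemma sum_shift_weights: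
  fixes X :: "'a \<Rightarrow> real"
  assumes "finite P" "p \<in> P" "r \<in> P"
  shows "(\<Sum>q\<in>P. (of_bool (q = r) - of_bool (q = p)) * X q) = X r - X p"
  using assms by (simp add: left_diff_distrib sum_subtractf)

lemma shifted_flow_feasible:
  assumes g: "g \<in> feasible_flows P" and "p \<in> P" "r \<in> P" "p \<noteq> r" "0 \<le> \<epsilon>" "\<epsilon> \<le> g p"
  shows "(\<lambda>q. g q + \<epsilon> * (of_bool (q = r) - of_bool (q = p))) \<in> feasible_flows P"
proof -
  have "(\<Sum>q\<in>P. g q + \<epsilon> * (of_bool (q = r) - of_bool (q = p))) = sum g P"
    using sum_shift_weights[OF feasible_flows_finite[OF g] assms(2,3), of "\<lambda>_. 1"]
    by (simp add: sum.distrib flip: sum_distrib_left)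
  with assms show ?thesis
    by (auto simp: feasible_flows_def)
qed

text \<open>Moving a little flow from a used route p to a strictly cheaper route r lowers the
  potential, so a minimiser of the potential is an equilibrium.\<close>
lemma beckmann_minimizer_in_wardrop_flows:
  assumes g: "g \<in> feasible_flows P"
    and min: "\<And>h. h \<in> feasible_flows P \<Longrightarrow> beckmann_potential c E P g \<le> beckmann_potential c E P h"
    and E: "finite E" "\<And>p. p \<in> P \<Longrightarrow> path_edges p \<subseteq> E"
    and cont: "\<And>e. e \<in> E \<Longrightarrow> continuous_on {0..} (c e)"
    and mono: "\<And>e. e \<in> E \<Longrightarrow> mono_on {0..} (c e)"
  shows "g \<in> wardrop_flows c P"
  unfolding wardrop_flows_def
proof (intro CollectI conjI g ballI impI, rule ccontr)
  fix p r assume p: "p \<in> P" and gp: "g p > 0" and r: "r \<in> P"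
    and "\<not> route_cost c P g p \<le> route_cost c P g r"
  then have cheaper: "route_cost c P g r < route_cost c P g p" and "p \<noteq> r" by auto
  define h where "h \<epsilon> = (\<lambda>q. g q + \<epsilon> * (of_bool (q = r) - of_bool (q = p)))" for \<epsilon> :: real
  have h_feasible: "h \<epsilon> \<in> feasible_flows P" if "0 \<le> \<epsilon>" "\<epsilon> \<le> g p" for \<epsilon>
    unfolding h_def using shifted_flow_feasible[OF g p r \<open>p \<noteq> r\<close> that] .
  define D where "D \<epsilon> = route_cost c P (h \<epsilon>) r - route_cost c P (h \<epsilon>) p" for \<epsilon>
  have "continuous_on {0..g p} (\<lambda>\<epsilon>. route_cost c P (h \<epsilon>) q)" if "q \<in> P" for q
    unfolding route_cost_def
  proof (rule continuous_on_sum)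
    fix e assume "e \<in> path_edges q"
    with E(2) that have e: "e \<in> E" by auto
    have "continuous_on {0..g p} (\<lambda>\<epsilon>. edge_flow P (h \<epsilon>) e)"
      unfolding edge_flow_def h_def by (intro continuous_intros)
    then show "continuous_on {0..g p} (\<lambda>\<epsilon>. c e (edge_flow P (h \<epsilon>) e))"
      by (rule continuous_on_compose2[OF cont[OF e]]) (auto intro!: edge_flow_nonneg[OF h_feasible])
  qed
  then have "continuous_on {0..g p} D"
    unfolding D_def using p r by (intro continuous_on_diff)
  moreover have "D 0 < 0"
    using cheaper by (simp add: D_def h_def)
  ultimately obtain \<epsilon> where \<epsilon>: "0 < \<epsilon>" "\<epsilon> \<le> g p" "D \<epsilon> < 0"
    using continuous_on_neg_near_0 gp by blast
  have h\<epsilon>: "h \<epsilon> \<in> feasible_flows P"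
    using \<epsilon> by (intro h_feasible) auto
  from g h\<epsilon> E cont mono
  have "beckmann_potential c E P (h \<epsilon>) - beckmann_potential c E P g
      \<le> (\<Sum>q\<in>P. (h \<epsilon> q - g q) * route_cost c P (h \<epsilon>) q)"
    by (rule beckmann_potential_diff_le)
  also have "\<dots> = \<epsilon> * D \<epsilon>"
    using sum_shift_weights[OF feasible_flows_finite[OF g] p r, of "route_cost c P (h \<epsilon>)"]
    by (simp add: h_def D_def mult.assoc flip: sum_distrib_left)
  also have "\<dots> < 0"
    using \<epsilon> by (simp add: mult_pos_neg)
  finally show False
    using min[OF h\<epsilon>] by simp
qed

lemma wardrop_flows_exist:
  assumes "finite P" "P \<noteq> {}" and E: "finite E" "\<And>p. p \<in> P \<Longrightarrow> path_edges p \<subseteq> E"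
    and cont: "\<And>e. e \<in> E \<Longrightarrow> continuous_on {0..} (c e)"
    and mono: "\<And>e. e \<in> E \<Longrightarrow> mono_on {0..} (c e)"
  obtains g where "g \<in> wardrop_flows c P"
proof -
  obtain p where "p \<in> P"
    using assms(2) by blast
  then have "feasible_flows P \<noteq> {}"
    using single_route_flow_feasible[OF assms(1)] by blast
  moreover have "continuous_on (feasible_flows P) (beckmann_potential c E P)"
    using cont by (rule beckmann_potential_continuous_on)
  ultimately have "\<exists>g\<in>feasible_flows P. \<forall>h\<in>feasible_flows P.
      beckmann_potential c E P g \<le> beckmann_potential c E P h"
    by (intro continuous_attains_inf feasible_flows_compact assms(1))
  then obtain g where g: "g \<in> feasible_flows P"
    and min: "\<And>h. h \<in> feasible_flows P \<Longrightarrow> beckmann_potential c E P g \<le> beckmann_potential c E P h"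
    by blast
  from g min E cont mono have "g \<in> wardrop_flows c P"
    by (rule beckmann_minimizer_in_wardrop_flows)
  then show thesis
    by (rule that)
qed

lemma path_cost_eq_route_cost: "path_cost C s P f p = route_cost (C s) P f p"
  by (simp add: path_cost_def route_cost_def)

lemma exp_cost_eq_route_cost: "exp_cost m C \<phi> P f p = route_cost (mixed_edge_cost m C \<phi>) P f p"
  unfolding exp_cost_def path_cost_def route_cost_def mixed_edge_cost_def
  by (simp add: sum_distrib_left) (rule sum.swap)

lemma wardrop_eq_eq_wardrop_flows: "wardrop_eq m C P \<phi> = wardrop_flows (mixed_edge_cost m C \<phi>) P"
  by (simp add: wardrop_eq_def wardrop_flows_def exp_cost_eq_route_cost)

lemma exp_cost_point_dist:
  assumes "s \<in> {1..m}"
  shows "exp_cost m C (point_dist s) P f p = path_cost C s P f p"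
proof -
  have "point_dist s = (\<lambda>i. of_bool (i = s))"
    by (simp add: point_dist_def fun_eq_iff)
  with assms show ?thesis
    by (simp add: exp_cost_def)
qed

lemma wardrop_eq_point_dist:
  "s \<in> {1..m} \<Longrightarrow> wardrop_eq m C P (point_dist s) = wardrop_flows (C s) P"
  by (simp add: wardrop_eq_def wardrop_flows_def exp_cost_point_dist path_cost_eq_route_cost)

lemma mixed_edge_cost_strict_mono:
  assumes \<phi>: "\<phi> \<in> prob_simplex m" and mono: "\<And>s. s \<in> {1..m} \<Longrightarrow> strict_mono_on {0..} (C s e)"
  shows "strict_mono_on {0..} (mixed_edge_cost m C \<phi> e)"
proof (rule strict_mono_onI)
  fix x y :: real assume "x \<in> {0..}" "y \<in> {0..}" "x < y"
  then have gain: "C s e x < C s e y" if "s \<in> {1..m}" for s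
    using strict_mono_onD[OF mono[OF that]] by simp
  have "(\<Sum>s=1..m. \<phi> s) = 1"
    using \<phi> by (simp add: prob_simplex_def)
  then obtain s where s: "s \<in> {1..m}" "\<phi> s \<noteq> 0"
    by (metis sum.neutral zero_neq_one)
  have nonneg: "\<And>s. s \<in> {1..m} \<Longrightarrow> 0 \<le> \<phi> s"
    using \<phi> by (simp add: prob_simplex_def)
  have "0 < \<phi> s * (C s e y - C s e x)"
    using s nonneg[OF s(1)] gain[OF s(1)] by simp
  moreover have "0 \<le> \<phi> s * (C s e y - C s e x)" if "s \<in> {1..m}" for s
    using nonneg[OF that] gain[OF that] by simp
  ultimately have "0 < (\<Sum>s=1..m. \<phi> s * (C s e y - C s e x))"
    using s(1) by (intro sum_pos2[of _ s]) auto
  then show "mixed_edge_cost m C \<phi> e x < mixed_edge_cost m C \<phi> e y"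
    by (simp add: mixed_edge_cost_def right_diff_distrib sum_subtractf)
qed

lemma wardrop_eq_iff_cost_gaps:
  assumes f: "f \<in> feasible_flows P"
  shows "f \<in> wardrop_eq m C P \<psi> \<longleftrightarrow>
    (\<forall>p\<in>P. \<forall>r\<in>P. f p > 0 \<longrightarrow> f r > 0 \<longrightarrow>
       (\<Sum>s=1..m. (path_cost C s P f p - path_cost C s P f r) * \<psi> s) = 0) \<and>
    (\<forall>p\<in>P. \<forall>r\<in>P. f p > 0 \<longrightarrow> f r = 0 \<longrightarrow>
       (\<Sum>s=1..m. (path_cost C s P f p - path_cost C s P f r) * \<psi> s) \<le> 0)"
proof -
  let ?c = "exp_cost m C \<psi> P f"
  have gap: "(\<Sum>s=1..m. (path_cost C s P f p - path_cost C s P f r) * \<psi> s) = ?c p - ?c r" for p r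
    by (simp add: exp_cost_def algebra_simps sum_subtractf)
  have wardrop: "f \<in> wardrop_eq m C P \<psi> \<longleftrightarrow> (\<forall>p\<in>P. f p > 0 \<longrightarrow> (\<forall>r\<in>P. ?c p \<le> ?c r))"
    using f by (simp add: wardrop_eq_def)
  have support: "f r > 0 \<or> f r = 0" if "r \<in> P" for r
    using feasible_flows_nonneg[OF f that] by (simp add: less_le)
  show ?thesis
    unfolding wardrop gap
  proof (intro iffI conjI ballI impI)
    fix p r assume min: "\<forall>p\<in>P. f p > 0 \<longrightarrow> (\<forall>r\<in>P. ?c p \<le> ?c r)"
      and p: "p \<in> P" "f p > 0" and r: "r \<in> P"
    then have "?c p \<le> ?c r"
      by blast
    then show "?c p - ?c r \<le> 0"
      by simp
    assume "f r > 0"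
    with min p r have "?c r \<le> ?c p" "?c p \<le> ?c r"
      by blast+
    then show "?c p - ?c r = 0"
      by simp
  next
    fix p r assume gaps: "(\<forall>p\<in>P. \<forall>r\<in>P. f p > 0 \<longrightarrow> f r > 0 \<longrightarrow> ?c p - ?c r = 0) \<and>
        (\<forall>p\<in>P. \<forall>r\<in>P. f p > 0 \<longrightarrow> f r = 0 \<longrightarrow> ?c p - ?c r \<le> 0)"
      and p: "p \<in> P" "f p > 0" and r: "r \<in> P"
    from support[OF r] show "?c p \<le> ?c r"
    proof
      assume "f r > 0"
      with gaps p r have "?c p - ?c r = 0"
        by blast
      then show ?thesis
        by simp
    next
      assume "f r = 0"
      with gaps p r have "?c p - ?c r \<le> 0"
        by blast
      then show ?thesis
        by simp
    qed
  qed
qed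

lemma wardrop_eq_beliefs_eq:
  assumes "f \<in> feasible_flows P"
  shows "{\<psi> \<in> S.
      (\<forall>p\<in>P. \<forall>r\<in>P. f p > 0 \<longrightarrow> f r > 0 \<longrightarrow>
         (\<Sum>s=1..m. (path_cost C s P f p - path_cost C s P f r) * \<psi> s) = 0) \<and>
      (\<forall>p\<in>P. \<forall>r\<in>P. f p > 0 \<longrightarrow> f r = 0 \<longrightarrow>
         (\<Sum>s=1..m. (path_cost C s P f p - path_cost C s P f r) * \<psi> s) \<le> 0)}
    = {\<psi> \<in> S. f \<in> wardrop_eq m C P \<psi>}"
  by (simp only: wardrop_eq_iff_cost_gaps[OF assms])

lemma sum_1_2: "(\<Sum>s::nat=1..2. w s) = w 1 + (w 2 :: 'a :: comm_monoid_add)"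
  by (simp add: numeral_2_eq_2)

lemma prob_simplex_2_snd: "w \<in> prob_simplex 2 \<Longrightarrow> w 2 = 1 - w 1"
  unfolding prob_simplex_def sum_1_2 by simp

lemma prob_simplex_2_eqI:
  assumes \<phi>: "\<phi> \<in> prob_simplex 2" and \<psi>: "\<psi> \<in> prob_simplex 2" and "\<phi> 1 = \<psi> 1"
  shows "\<phi> = \<psi>"
proof
  fix s :: nat
  have "s = 1 \<or> s = 2 \<or> s \<notin> {1..2}"
    by auto
  moreover have "\<phi> 2 = \<psi> 2"
    using prob_simplex_2_snd[OF \<phi>] prob_simplex_2_snd[OF \<psi>] \<open>\<phi> 1 = \<psi> 1\<close> by simp
  moreover have "\<phi> s = \<psi> s" if "s \<notin> {1..2}"
    using \<phi> \<psi> that by (simp add: prob_simplex_def)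
  ultimately show "\<phi> s = \<psi> s"
    using \<open>\<phi> 1 = \<psi> 1\<close> by blast
qed

text \<open>Between two used routes the differences of the two state costs are orthogonal to
  both weight vectors, which are linearly independent, so the differences vanish.\<close>
lemma two_state_path_costs_eq:
  assumes \<phi>: "\<phi> \<in> prob_simplex 2" and \<psi>: "\<psi> \<in> prob_simplex 2" and "\<phi> \<noteq> \<psi>"
    and f\<phi>: "f \<in> wardrop_eq 2 C P \<phi>" and f\<psi>: "f \<in> wardrop_eq 2 C P \<psi>"
    and p: "p \<in> P" "f p > 0" and q: "q \<in> P" "f q > 0"
  shows "path_cost C 1 P f p = path_cost C 1 P f q"
proof -
  define a where "a s = path_cost C s P f p - path_cost C s P f q" for s
  have balance: "a 2 + w 1 * (a 1 - a 2) = 0"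
    if "w \<in> prob_simplex 2" "f \<in> wardrop_eq 2 C P w" for w
  proof -
    have "exp_cost 2 C w P f p = exp_cost 2 C w P f q"
      using that(2) p q by (auto simp: wardrop_eq_def intro: antisym)
    then have "w 1 * a 1 + w 2 * a 2 = 0"
      unfolding exp_cost_def sum_1_2 a_def by (simp add: algebra_simps)
    then show ?thesis
      unfolding prob_simplex_2_snd[OF that(1)] by (simp add: algebra_simps)
  qed
  have "\<phi> 1 \<noteq> \<psi> 1"
    using prob_simplex_2_eqI[OF \<phi> \<psi>] \<open>\<phi> \<noteq> \<psi>\<close> by blast
  moreover have "(\<phi> 1 - \<psi> 1) * (a 1 - a 2) = 0"
    using balance[OF \<phi> f\<phi>] balance[OF \<psi> f\<psi>] by (simp add: algebra_simps)
  ultimately have "a 1 = a 2"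
    by simp
  with balance[OF \<phi> f\<phi>] have "a 1 = 0"
    by simp
  then show ?thesis
    by (simp add: a_def)
qed

lemma informative_wardrop_eq_belief_unique:
  assumes E: "finite E" "\<And>p. p \<in> P \<Longrightarrow> path_edges p \<subseteq> E"
    and cont: "\<And>e. e \<in> E \<Longrightarrow> continuous_on {0..} (C 1 e)"
    and mono: "\<And>e. e \<in> E \<Longrightarrow> strict_mono_on {0..} (C 1 e)"
    and \<phi>: "\<phi> \<in> prob_simplex 2" and \<psi>: "\<psi> \<in> prob_simplex 2"
    and f\<phi>: "f \<in> wardrop_eq 2 C P \<phi>" and f\<psi>: "f \<in> wardrop_eq 2 C P \<psi>"
    and informative: "f \<in> informative_flows C P"
  shows "\<psi> = \<phi>"
proof (rule ccontr)
  assume "\<psi> \<noteq> \<phi>"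
  have f: "f \<in> feasible_flows P"
    using f\<phi> by (simp add: wardrop_eq_def)
  then have "P \<noteq> {}"
    using feasible_flows_support_nonempty by blast
  from feasible_flows_finite[OF f] this E cont strict_mono_on_imp_mono_on[OF mono]
  obtain g where g: "g \<in> wardrop_flows (C 1) P"
    by (rule wardrop_flows_exist)
  then have "g \<in> wardrop_eq 2 C P (point_dist 1)"
    by (simp add: wardrop_eq_point_dist)
  then have g_support: "f p > 0" if "p \<in> P" "g p > 0" for p
    using that informative by (auto simp: used_routes_def informative_flows_def)
  obtain q0 where q0: "q0 \<in> P" "g q0 > 0"
    using feasible_flows_support_nonempty[OF wardrop_flows_feasible[OF g]] .
  have "route_cost (C 1) P f p = path_cost C 1 P f q0" if "p \<in> P" "g p > 0 \<or> f p > 0" for p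
  proof -
    have "f p > 0"
      using that g_support by blast
    with two_state_path_costs_eq[OF \<phi> \<psi> _ f\<phi> f\<psi> that(1) _ q0(1) g_support[OF q0]] \<open>\<psi> \<noteq> \<phi>\<close>
    show ?thesis
      by (simp add: path_cost_eq_route_cost)
  qed
  with g f E mono have "f \<in> wardrop_flows (C 1) P"
    by (rule wardrop_flows_if_cost_const_on_supports)
  with informative show False
    by (simp add: informative_flows_def wardrop_eq_point_dist)
qed

theorem lemma7:
  fixes E :: "('v \<times> 'v) set" and vo vd :: 'v
    and C :: "nat \<Rightarrow> ('v \<times> 'v) \<Rightarrow> real \<Rightarrow> real"
    and \<phi> :: "nat \<Rightarrow> real"
  defines "P \<equiv> od_paths E vo vd"
  assumes finE: "finite E"
    and cont: "\<And>s e. s \<in> {1..2} \<Longrightarrow> e \<in> E \<Longrightarrow> continuous_on {0..} (C s e)"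
    and incr: "\<And>s e. s \<in> {1..2} \<Longrightarrow> e \<in> E \<Longrightarrow> strict_mono_on {0..} (C s e)"
    and nonneg: "\<And>s e x. s \<in> {1..2} \<Longrightarrow> e \<in> E \<Longrightarrow> x \<ge> 0 \<Longrightarrow> C s e x \<ge> 0"
    and phi: "\<phi> \<in> prob_simplex 2"
    and inf: "\<exists>f \<in> wardrop_eq 2 C P \<phi>. f \<in> informative_flows C P"
  shows "\<forall>fh \<in> wardrop_eq 2 C P \<phi>.
     {\<psi> \<in> prob_simplex 2.
        (\<forall>p\<in>P. \<forall>r\<in>P. fh p > 0 \<longrightarrow> fh r > 0 \<longrightarrow>
           (\<Sum>s=1..2. (path_cost C s P fh p - path_cost C s P fh r) * \<psi> s) = 0) \<and>
        (\<forall>p\<in>P. \<forall>r\<in>P. fh p > 0 \<longrightarrow> fh r = 0 \<longrightarrow>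
           (\<Sum>s=1..2. (path_cost C s P fh p - path_cost C s P fh r) * \<psi> s) \<le> 0)}
     = {\<phi>}"
proof -
  obtain f where f: "f \<in> wardrop_eq 2 C P \<phi>" "f \<in> informative_flows C P"
    using inf by blast
  have paths: "\<And>p. p \<in> P \<Longrightarrow> path_edges p \<subseteq> E"
    unfolding P_def by (rule od_paths_edges)
  have mono\<phi>: "strict_mono_on {0..} (mixed_edge_cost 2 C \<phi> e)" if "e \<in> E" for e
    by (rule mixed_edge_cost_strict_mono[OF phi]) (rule incr[OF _ that])
  have "{\<psi> \<in> prob_simplex 2. fh \<in> wardrop_eq 2 C P \<psi>} = {\<phi>}" if fh: "fh \<in> wardrop_eq 2 C P \<phi>" for fh
  proof -
    from fh f(1) finE paths mono\<phi> have "\<forall>e\<in>E. edge_flow P fh e = edge_flow P f e"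
      unfolding wardrop_eq_eq_wardrop_flows by (rule wardrop_flows_edge_flows_eq)
    then have shared: "f \<in> wardrop_eq 2 C P \<psi>" if "fh \<in> wardrop_eq 2 C P \<psi>" for \<psi>
      using that wardrop_flows_if_edge_flows_eq[OF _ wardrop_flows_feasible finE paths]
        f(1) unfolding wardrop_eq_eq_wardrop_flows by metis
    have "\<psi> = \<phi>" if "\<psi> \<in> prob_simplex 2" "fh \<in> wardrop_eq 2 C P \<psi>" for \<psi>
      using informative_wardrop_eq_belief_unique[OF finE paths cont incr phi that(1) f(1) shared[OF that(2)] f(2)]
      by simp
    with fh phi show ?thesis
      by blast
  qed
  moreover have "fh \<in> feasible_flows P" if "fh \<in> wardrop_eq 2 C P \<phi>" for fh
    using that by (simp add: wardrop_eq_def)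
  ultimately show ?thesis
    by (intro ballI, subst wardrop_eq_beliefs_eq) auto
qed

end
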